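(* For $n>2$, the lattice generated by the vertices of $P(D_n)$ has index one in the lattice $\mathrm{aff}(P(D_n))\cap\mathbb{Z}^{n\times n}$; that is, every integer matrix $X$ that is a real linear combination of the differences $g-e$ ($g\in D_n$) is an integer linear combination of these differences.
   Context: Each $g\in S_n$ is identified with its $n\times n$ permutation matrix (entry $(i,j)$ is $1$ iff $g(i)=j$); $e$ is the identity; $P(G)=\mathrm{conv}\{g:g\in G\}$. $D_n\le S_n$ is generated by $r=(1\ 2\ \cdots\ n)$ and $f=(1\ n)(2\ n-1)\cdots(\lfloor\frac{n+1}{2}\rfloor\ \lceil\frac{n+1}{2}\rceil)$. *)

theory Defs
  imports Complex_Main
begin

text \<open>Points are 0-indexed: {0..<n} stands for {1..n}. Permutations of {0..<n}
are functions nat \<Rightarrow> nat that fix every point \<ge> n.\<close>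

definition rot :: "nat \<Rightarrow> nat \<Rightarrow> nat" where
  "rot n i = (if i < n then (i + 1) mod n else i)"

definition flip :: "nat \<Rightarrow> nat \<Rightarrow> nat" where
  "flip n i = (if i < n then n - 1 - i else i)"

text \<open>D_n: the subgroup of S_n generated by r and f. Since S_n is finite,
the generated submonoid equals the generated subgroup.\<close>
inductive_set dihedral :: "nat \<Rightarrow> (nat \<Rightarrow> nat) set" for n where
  id_in: "id \<in> dihedral n"
| rot_in: "g \<in> dihedral n \<Longrightarrow> rot n \<circ> g \<in> dihedral n"
| flip_in: "g \<in> dihedral n \<Longrightarrow> flip n \<circ> g \<in> dihedral n"

definition perm_mat :: "(nat \<Rightarrow> nat) \<Rightarrow> nat \<Rightarrow> nat \<Rightarrow> real" where
  "perm_mat g i j = (if g i = j then 1 else 0)"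

end

theory Submission
  imports Defs
begin

text \<open>
  Write \<open>\<rho>\<^sub>k\<close> for the rotation \<open>i \<mapsto> i + k\<close> and \<open>\<sigma>\<^sub>k\<close> for the reflection
  \<open>i \<mapsto> k - i\<close> (mod n); for \<open>n > 2\<close> these are the \<open>2n\<close> distinct elements of \<open>D\<^sub>n\<close>.
  Exactly one rotation and one reflection send \<open>i\<close> to \<open>j\<close>, namely \<open>\<rho>\<^sub>j\<^sub>-\<^sub>i\<close> and
  \<open>\<sigma>\<^sub>i\<^sub>+\<^sub>j\<close>, so the combinations \<open>\<Sum>\<^sub>g c\<^sub>g (g - e)\<close> are precisely the matrices
  \<open>X i j = a (j - i) + b (i + j)\<close> with \<open>\<Sum>\<^sub>k (a k + b k) = 0\<close>, where \<open>a k = c(\<rho>\<^sub>k)\<close>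
  (minus \<open>\<Sum> c\<close> for \<open>k = 0\<close>) and \<open>b k = c(\<sigma>\<^sub>k)\<close>.

  If such an \<open>X\<close> is integral, the entries at \<open>(0, k)\<close> and \<open>(k div 2, k div 2 + k mod 2)\<close>
  show that \<open>a k - a (k mod 2)\<close> and \<open>b k + a (k mod 2)\<close> are integers. Moreover the
  fractional part of \<open>a (k mod 2)\<close> agrees at the two indices \<open>j - i\<close> and \<open>i + j\<close> of
  every entry: for even \<open>n\<close> they have the same parity, and for odd \<open>n\<close> the entries at
  \<open>(h, h)\<close> and \<open>(n - 1, 0)\<close>, with \<open>2h = n - 1\<close>, force \<open>frac (a 0) = frac (a 1)\<close>.
  Moving this fractional part from \<open>a\<close> to \<open>b\<close> gives integral \<open>a', b'\<close> describing the
  same \<open>X\<close>, and hence integral coefficients.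
\<close>

lemma mod_less_double: "(x::nat) < 2 * n \<Longrightarrow> x mod n = (if x < n then x else x - n)"
  by (cases "x < n") (auto simp: le_mod_geq)

definition rotation :: "nat \<Rightarrow> nat \<Rightarrow> nat \<Rightarrow> nat" where
  "rotation n k = (\<lambda>i. if i < n then (i + k) mod n else i)"

definition reflection :: "nat \<Rightarrow> nat \<Rightarrow> nat \<Rightarrow> nat" where
  "reflection n k = (\<lambda>i. if i < n then (k + (n - i)) mod n else i)"

lemma dihedral_comp_closed: "h \<in> dihedral n \<Longrightarrow> g \<in> dihedral n \<Longrightarrow> h \<circ> g \<in> dihedral n"
  by (induction h rule: dihedral.induct) (auto simp: comp_assoc intro: dihedral.intros)

lemma rotation_0: "rotation n 0 = id"
  by (auto simp: rotation_def)

lemma rotation_Suc: "rotation n (Suc k) = rot n \<circ> rotation n k"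
  by (auto simp: rotation_def rot_def mod_Suc_eq)

lemma rotation_in_dihedral: "rotation n k \<in> dihedral n"
  by (induction k) (metis rotation_0 dihedral.id_in, metis rotation_Suc dihedral.rot_in)

lemma reflection_0: "0 < n \<Longrightarrow> reflection n 0 = rot n \<circ> flip n"
  by (rule ext) (auto simp: reflection_def rot_def flip_def Suc_diff_Suc)

lemma reflection_eq_rotation_comp: "0 < n \<Longrightarrow> reflection n k = rotation n k \<circ> reflection n 0"
  by (rule ext) (auto simp: reflection_def rotation_def mod_add_left_eq add.commute[of k])

lemma reflection_in_dihedral: "0 < n \<Longrightarrow> reflection n k \<in> dihedral n"
proof -
  assume "0 < n"
  have "rot n \<circ> flip n \<in> dihedral n"
    by (metis comp_id dihedral.id_in dihedral.flip_in dihedral.rot_in)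
  then show ?thesis
    by (simp add: \<open>0 < n\<close> reflection_0 reflection_eq_rotation_comp[of n k]
        dihedral_comp_closed rotation_in_dihedral)
qed

lemma rot_comp_rotation: "0 < n \<Longrightarrow> k < n \<Longrightarrow> rot n \<circ> rotation n k = rotation n ((k + 1) mod n)"
  by (rule ext) (auto simp: rotation_def rot_def mod_less_double)

lemma rot_comp_reflection: "0 < n \<Longrightarrow> k < n \<Longrightarrow> rot n \<circ> reflection n k = reflection n ((k + 1) mod n)"
  by (rule ext) (auto simp: reflection_def rot_def mod_less_double)

lemma flip_comp_rotation: "0 < n \<Longrightarrow> k < n \<Longrightarrow> flip n \<circ> rotation n k = reflection n (n - 1 - k)"
  by (rule ext) (auto simp: rotation_def reflection_def flip_def mod_less_double)

lemma flip_comp_reflection: "0 < n \<Longrightarrow> k < n \<Longrightarrow> flip n \<circ> reflection n k = rotation n (n - 1 - k)"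
  by (rule ext) (auto simp: rotation_def reflection_def flip_def mod_less_double)

lemma dihedral_cases:
  assumes "g \<in> dihedral n" and "0 < n"
  shows "\<exists>k<n. g = rotation n k \<or> g = reflection n k"
  using assms
proof (induction g rule: dihedral.induct)
  case id_in
  then show ?case by (metis rotation_0)
next
  case (rot_in g)
  then show ?case by (metis mod_less_divisor rot_comp_rotation rot_comp_reflection)
next
  case (flip_in g)
  then obtain k where "k < n" "g = rotation n k \<or> g = reflection n k" by blast
  moreover have "n - 1 - k < n" using \<open>0 < n\<close> by simp
  ultimately show ?case using flip_comp_rotation flip_comp_reflection \<open>0 < n\<close> by metis
qed

lemma dihedral_eq: "0 < n \<Longrightarrow> dihedral n = rotation n ` {..<n} \<union> reflection n ` {..<n}"
  using dihedral_cases rotation_in_dihedral reflection_in_dihedral by blast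

lemma rotation_apply_eq_iff:
  "i < n \<Longrightarrow> j < n \<Longrightarrow> k < n \<Longrightarrow> rotation n k i = j \<longleftrightarrow> k = (j + (n - i)) mod n"
  by (simp add: rotation_def mod_less_double; arith)

lemma reflection_apply_eq_iff:
  "i < n \<Longrightarrow> j < n \<Longrightarrow> k < n \<Longrightarrow> reflection n k i = j \<longleftrightarrow> k = (i + j) mod n"
  by (simp add: reflection_def mod_less_double; arith)

lemma rotation_apply_0: "k < n \<Longrightarrow> rotation n k 0 = k"
  by (simp add: rotation_def)

lemma reflection_apply_0: "k < n \<Longrightarrow> reflection n k 0 = k"
  by (simp add: reflection_def)

lemma rotation_index_eq_0_iff: "(i::nat) < n \<Longrightarrow> j < n \<Longrightarrow> (j + (n - i)) mod n = 0 \<longleftrightarrow> i = j"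
  using rotation_apply_eq_iff[of i n j 0] by (auto simp: rotation_0)

lemma finite_dihedral: "0 < n \<Longrightarrow> finite (dihedral n)"
  by (simp add: dihedral_eq)

lemma rotation_neq_reflection: "2 < n \<Longrightarrow> k < n \<Longrightarrow> m < n \<Longrightarrow> rotation n k \<noteq> reflection n m"
proof
  assume n: "2 < n" and "k < n" "m < n" and eq: "rotation n k = reflection n m"
  then have "k = m"
    by (metis rotation_apply_0 reflection_apply_0)
  moreover have "rotation n k 1 = reflection n m 1"
    using eq by simp
  ultimately show False
    using n \<open>k < n\<close> by (simp add: rotation_def reflection_def mod_less_double; arith)
qed

lemma sum_dihedral:
  assumes "2 < n"
  shows "(\<Sum>g\<in>dihedral n. w g) = (\<Sum>k<n. w (rotation n k)) + (\<Sum>k<n. w (reflection n k))"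
proof -
  have "inj_on (rotation n) {..<n}" "inj_on (reflection n) {..<n}"
    by (metis inj_onI lessThan_iff rotation_apply_0, metis inj_onI lessThan_iff reflection_apply_0)
  moreover have "rotation n ` {..<n} \<inter> reflection n ` {..<n} = {}"
    using rotation_neq_reflection[OF assms] by blast
  ultimately show ?thesis
    using assms by (simp add: dihedral_eq sum.union_disjoint sum.reindex)
qed

lemma dihedral_function_exists:
  assumes "2 < n"
  obtains c :: "(nat \<Rightarrow> nat) \<Rightarrow> 'a"
  where "\<And>k. k < n \<Longrightarrow> c (rotation n k) = f k"
    and "\<And>k. k < n \<Longrightarrow> c (reflection n k) = g k"
proof -
  define c where "c h = (if h \<in> rotation n ` {..<n} then f (h 0) else g (h 0))" for h
  have "c (rotation n k) = f k" if "k < n" for k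
  proof -
    have "rotation n k \<in> rotation n ` {..<n}"
      using that by blast
    then show ?thesis
      using that by (simp add: c_def rotation_apply_0)
  qed
  moreover have "c (reflection n k) = g k" if "k < n" for k
  proof -
    have "reflection n k \<notin> rotation n ` {..<n}"
      using rotation_neq_reflection[OF assms _ that] by (metis imageE lessThan_iff)
    then show ?thesis
      using that by (simp add: c_def reflection_apply_0)
  qed
  ultimately show thesis
    by (rule that)
qed

lemma dihedral_fiber:
  assumes "i < n" "j < n"
  shows "{g \<in> dihedral n. g i = j} = {rotation n ((j + (n - i)) mod n), reflection n ((i + j) mod n)}"
proof (intro set_eqI iffI)
  fix g
  assume "g \<in> {g \<in> dihedral n. g i = j}"
  then obtain k where "k < n" "g = rotation n k \<or> g = reflection n k" "g i = j"
    using dihedral_cases[of g n] assms by auto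
  then show "g \<in> {rotation n ((j + (n - i)) mod n), reflection n ((i + j) mod n)}"
    using rotation_apply_eq_iff[OF assms \<open>k < n\<close>] reflection_apply_eq_iff[OF assms \<open>k < n\<close>]
    by auto
next
  fix g
  assume "g \<in> {rotation n ((j + (n - i)) mod n), reflection n ((i + j) mod n)}"
  moreover have "0 < n"
    using assms by simp
  ultimately show "g \<in> {g \<in> dihedral n. g i = j}"
    using rotation_in_dihedral reflection_in_dihedral rotation_apply_eq_iff reflection_apply_eq_iff assms
    by auto
qed

lemma dihedral_combination_entry:
  assumes "2 < n" "i < n" "j < n"
  shows "(\<Sum>g\<in>dihedral n. w g * (perm_mat g i j - perm_mat id i j))
    = w (rotation n ((j + (n - i)) mod n)) + w (reflection n ((i + j) mod n))
      - (if i = j then \<Sum>g\<in>dihedral n. w g else 0)"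
proof -
  have fin: "finite (dihedral n)"
    using assms finite_dihedral by simp
  have "(\<Sum>g\<in>dihedral n. w g * perm_mat g i j) = (\<Sum>g\<in>{g \<in> dihedral n. g i = j}. w g)"
    by (simp add: perm_mat_def sum.inter_filter[OF fin] if_distrib cong: if_cong)
  also have "\<dots> = w (rotation n ((j + (n - i)) mod n)) + w (reflection n ((i + j) mod n))"
    using assms by (simp add: dihedral_fiber rotation_neq_reflection)
  finally show ?thesis
    by (simp add: right_diff_distrib sum_subtractf perm_mat_def)
qed

lemma dihedral_combination_decomposes:
  fixes c :: "(nat \<Rightarrow> nat) \<Rightarrow> real"
  assumes "2 < n"
  obtains a b :: "nat \<Rightarrow> real"
  where "(\<Sum>k<n. a k + b k) = 0"
    and "\<And>i j. i < n \<Longrightarrow> j < n \<Longrightarrow>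
      (\<Sum>g\<in>dihedral n. c g * (perm_mat g i j - perm_mat id i j))
        = a ((j + (n - i)) mod n) + b ((i + j) mod n)"
proof -
  define a where "a k = c (rotation n k) - (if k = 0 then \<Sum>g\<in>dihedral n. c g else 0)" for k
  define b where "b k = c (reflection n k)" for k
  have "(\<Sum>k<n. a k + b k) = 0"
    using assms by (simp add: a_def b_def sum.distrib sum_subtractf sum_dihedral)
  moreover have "(\<Sum>g\<in>dihedral n. c g * (perm_mat g i j - perm_mat id i j))
      = a ((j + (n - i)) mod n) + b ((i + j) mod n)" if "i < n" "j < n" for i j
    using dihedral_combination_entry[OF assms that, of c] rotation_index_eq_0_iff[OF that]
    by (simp add: a_def b_def)
  ultimately show thesis
    by (rule that)
qed

lemma dihedral_combination_of_decomposition_int: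
  fixes a b :: "nat \<Rightarrow> int"
  assumes "2 < n" and "(\<Sum>k<n. a k + b k) = 0"
  obtains c :: "(nat \<Rightarrow> nat) \<Rightarrow> int"
  where "\<And>i j. i < n \<Longrightarrow> j < n \<Longrightarrow>
    (\<Sum>g\<in>dihedral n. of_int (c g) * (perm_mat g i j - perm_mat id i j))
      = of_int (a ((j + (n - i)) mod n) + b ((i + j) mod n))"
proof -
  obtain c :: "(nat \<Rightarrow> nat) \<Rightarrow> int"
    where c_rotation: "\<And>k. k < n \<Longrightarrow> c (rotation n k) = a k"
      and c_reflection: "\<And>k. k < n \<Longrightarrow> c (reflection n k) = b k"
    using dihedral_function_exists[OF assms(1), where f = a and g = b] by blast
  have "(\<Sum>g\<in>dihedral n. c g) = (\<Sum>k<n. c (rotation n k) + c (reflection n k))"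
    by (simp add: sum_dihedral[OF assms(1)] sum.distrib)
  also have "\<dots> = 0"
    using assms(2) by (simp add: c_rotation c_reflection)
  finally have "(\<Sum>g\<in>dihedral n. real_of_int (c g)) = 0"
    by (simp flip: of_int_sum)
  then have "(\<Sum>g\<in>dihedral n. of_int (c g) * (perm_mat g i j - perm_mat id i j))
      = of_int (a ((j + (n - i)) mod n) + b ((i + j) mod n))" if "i < n" "j < n" for i j
    using dihedral_combination_entry[OF assms(1) that, of "\<lambda>g. of_int (c g)"] assms(1)
    by (simp add: c_rotation c_reflection)
  then show thesis
    by (rule that)
qed

lemma even_mod_parity:
  fixes n i j :: nat
  assumes "even n" "i < n"
  shows "(j + (n - i)) mod n mod 2 = (i + j) mod n mod 2"
proof -
  have "even (n - i) \<longleftrightarrow> even i"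
    using assms by (simp add: even_diff_nat)
  then have "(j + (n - i)) mod 2 = (i + j) mod 2"
    by (simp add: mod2_eq_if)
  then show ?thesis
    using assms(1) by (simp add: mod_mod_cancel)
qed

context
  fixes n :: nat and a b :: "nat \<Rightarrow> real"
  assumes n: "1 < n"
    and integral: "\<And>i j. i < n \<Longrightarrow> j < n \<Longrightarrow> a ((j + (n - i)) mod n) + b ((i + j) mod n) \<in> \<int>"
begin

lemma integral_parity_sum: "k < n \<Longrightarrow> a (k mod 2) + b k \<in> \<int>"
proof -
  assume "k < n"
  define m where "m = k div 2"
  have "m < n" "m + k mod 2 < n" "k = 2 * m + k mod 2"
    using \<open>k < n\<close> by (auto simp: m_def)
  moreover have "(m + k mod 2 + (n - m)) mod n = k mod 2"
    using n \<open>m < n\<close> by (simp add: mod2_eq_if)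
  moreover have "m + (m + k mod 2) = k"
    unfolding m_def by presburger
  ultimately show ?thesis
    using integral[of m "m + k mod 2"] \<open>k < n\<close> by simp
qed

lemma integral_parity_diff: "k < n \<Longrightarrow> a k - a (k mod 2) \<in> \<int>"
proof -
  assume "k < n"
  then have "a k + b k \<in> \<int>"
    using integral[of 0 k] n by simp
  then have "(a k + b k) - (a (k mod 2) + b k) \<in> \<int>"
    using integral_parity_sum[OF \<open>k < n\<close>] by (rule Ints_diff)
  then show ?thesis
    by simp
qed

lemma frac_parity_eq:
  assumes "i < n" "j < n"
  shows "frac (a ((j + (n - i)) mod n mod 2)) = frac (a ((i + j) mod n mod 2))"
proof (cases "even n")
  case True
  then show ?thesis
    using assms by (simp only: even_mod_parity)
next
  case False
  define h where "h = (n - 1) div 2"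
  have "h + h = n - 1"
    using False unfolding h_def by presburger
  then have "h < n" "(h + h) mod n = n - 1"
    using n by auto
  then have "a 0 + b (n - 1) \<in> \<int>"
    using integral[of h h] by simp
  moreover have "a 1 + b (n - 1) \<in> \<int>"
    using integral[of "n - 1" 0] n by simp
  ultimately have "(a 1 + b (n - 1)) - (a 0 + b (n - 1)) \<in> \<int>"
    by (simp only: Ints_diff)
  then have "frac (a 1) = frac (a 0)"
    by (intro frac_diff_zero) simp
  then have "frac (a (k mod 2)) = frac (a 0)" for k
    by (cases "k mod 2 = 0") (auto simp: mod2_eq_if)
  then show ?thesis
    by simp
qed

lemma integer_decomposition_exists:
  obtains a' b' :: "nat \<Rightarrow> int"
  where "\<And>k. k < n \<Longrightarrow> of_int (a' k) + of_int (b' k) = a k + b k"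
    and "\<And>i j. i < n \<Longrightarrow> j < n \<Longrightarrow>
      of_int (a' ((j + (n - i)) mod n)) + of_int (b' ((i + j) mod n))
        = a ((j + (n - i)) mod n) + b ((i + j) mod n)"
proof -
  define s where "s k = frac (a (k mod 2))" for k
  have "a k - s k \<in> \<int>" if "k < n" for k
  proof -
    have "a k - s k = (a k - a (k mod 2)) + of_int \<lfloor>a (k mod 2)\<rfloor>"
      by (simp add: s_def frac_def)
    then show ?thesis
      using integral_parity_diff[OF that] by (metis Ints_add Ints_of_int)
  qed
  moreover have "b k + s k \<in> \<int>" if "k < n" for k
  proof -
    have "b k + s k = (a (k mod 2) + b k) - of_int \<lfloor>a (k mod 2)\<rfloor>"
      by (simp add: s_def frac_def)
    then show ?thesis
      using integral_parity_sum[OF that] by (metis Ints_diff Ints_of_int)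
  qed
  ultimately have a': "of_int \<lfloor>a k - s k\<rfloor> = a k - s k"
    and b': "of_int \<lfloor>b k + s k\<rfloor> = b k + s k" if "k < n" for k
    using that by (simp_all only: of_int_floor)
  show ?thesis
  proof (rule that)
    show "of_int \<lfloor>a k - s k\<rfloor> + of_int \<lfloor>b k + s k\<rfloor> = a k + b k" if "k < n" for k
      using a'[OF that] b'[OF that] by linarith
  next
    fix i j
    assume "i < n" "j < n"
    then have "s ((j + (n - i)) mod n) = s ((i + j) mod n)"
      using frac_parity_eq by (simp only: s_def)
    moreover have d: "(j + (n - i)) mod n < n" and t: "(i + j) mod n < n"
      using n by simp_all
    ultimately show "of_int \<lfloor>a ((j + (n - i)) mod n) - s ((j + (n - i)) mod n)\<rfloor>
        + of_int \<lfloor>b ((i + j) mod n) + s ((i + j) mod n)\<rfloor>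
        = a ((j + (n - i)) mod n) + b ((i + j) mod n)"
      using a'[OF d] b'[OF t] by linarith
  qed
qed

end

theorem proposition4:
  fixes n :: nat and X :: "nat \<Rightarrow> nat \<Rightarrow> real"
  assumes "n > 2"
    and "\<forall>i<n. \<forall>j<n. X i j \<in> \<int>"
    and "\<exists>c :: (nat \<Rightarrow> nat) \<Rightarrow> real. \<forall>i<n. \<forall>j<n.
           X i j = (\<Sum>g\<in>dihedral n. c g * (perm_mat g i j - perm_mat id i j))"
  shows "\<exists>c :: (nat \<Rightarrow> nat) \<Rightarrow> int. \<forall>i<n. \<forall>j<n.
           X i j = (\<Sum>g\<in>dihedral n. of_int (c g) * (perm_mat g i j - perm_mat id i j))"
proof -
  obtain c where c: "\<And>i j. i < n \<Longrightarrow> j < n \<Longrightarrow>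
      X i j = (\<Sum>g\<in>dihedral n. c g * (perm_mat g i j - perm_mat id i j))"
    using assms(3) by blast
  obtain a b where sum_zero: "(\<Sum>k<n. a k + b k) = 0"
    and combination: "\<And>i j. i < n \<Longrightarrow> j < n \<Longrightarrow>
      (\<Sum>g\<in>dihedral n. c g * (perm_mat g i j - perm_mat id i j))
        = a ((j + (n - i)) mod n) + b ((i + j) mod n)"
    using dihedral_combination_decomposes[OF assms(1)] by blast
  have "1 < n"
    using assms(1) by simp
  moreover have "a ((j + (n - i)) mod n) + b ((i + j) mod n) \<in> \<int>" if "i < n" "j < n" for i j
  proof -
    have "X i j \<in> \<int>"
      using assms(2) that by blast
    then show ?thesis
      by (simp only: c[OF that] combination[OF that])
  qed
  ultimately obtain a' b' :: "nat \<Rightarrow> int"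
    where sum_eq: "\<And>k. k < n \<Longrightarrow> of_int (a' k) + of_int (b' k) = a k + b k"
      and entry_eq: "\<And>i j. i < n \<Longrightarrow> j < n \<Longrightarrow>
        of_int (a' ((j + (n - i)) mod n)) + of_int (b' ((i + j) mod n))
          = a ((j + (n - i)) mod n) + b ((i + j) mod n)"
    using integer_decomposition_exists by blast
  have "real_of_int (\<Sum>k<n. a' k + b' k) = (\<Sum>k<n. a k + b k)"
    by (simp add: sum_eq)
  then have "(\<Sum>k<n. a' k + b' k) = 0"
    unfolding sum_zero of_int_eq_0_iff .
  then obtain c' :: "(nat \<Rightarrow> nat) \<Rightarrow> int"
    where c': "\<And>i j. i < n \<Longrightarrow> j < n \<Longrightarrow>
      (\<Sum>g\<in>dihedral n. of_int (c' g) * (perm_mat g i j - perm_mat id i j))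
        = of_int (a' ((j + (n - i)) mod n) + b' ((i + j) mod n))"
    using dihedral_combination_of_decomposition_int[OF assms(1)] by blast
  have "X i j = (\<Sum>g\<in>dihedral n. of_int (c' g) * (perm_mat g i j - perm_mat id i j))"
    if "i < n" "j < n" for i j
    using c[OF that] combination[OF that] entry_eq[OF that] c'[OF that] by simp
  then show ?thesis
    by blast
qed

end
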